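(* Let $\mu>0$, $\sigma\ge0$ and $r=\sigma/\mu$. Let $A$ be the log-lottery $P^{\log}_{\mu,\sigma}$ (a single-item mechanism posting a random price). Then for every $F\in\mathbb{F}_{\mu,\sigma}$, \[\frac{\mathrm{OPT}(F)}{\mathrm{REV}(A;F)}\le \rho(r),\] where $\rho(r)$ is the unique positive solution $\rho$ of $\frac{1}{\rho^2}\left(2e^{\rho-1}-1\right)=r^2+1$. In particular the robust approximation ratio satisfies $\mathrm{APX}(\mu,\sigma)\le\rho(r)$.
   Context: A nonnegative real random variable is $(\mu,\sigma)$-distributed if its expectation is $\mu$ and its standard deviation is at most $\sigma$; $\mathbb{F}_{\mu,\sigma}$ is the class of such distributions. Single item, single buyer with value $X\sim F$. A (possibly randomized) truthful mechanism is identified with a probability distribution $A$ over prices $p\ge0$: a price $p\sim A$ is drawn and the buyer buys iff $X\ge p$. $\mathrm{REV}(p;F)=p\Pr[X\ge p]$, $\mathrm{REV}(A;F)=\mathbb{E}_{p\sim A}[\mathrm{REV}(p;F)]$, $\mathrm{OPT}(F)=\sup_{p\ge0}\mathrm{REV}(p;F)$, and $\mathrm{APX}(\mu,\sigma)=\inf_A\sup_{F\in\mathbb{F}_{\mu,\sigma}}\mathrm{OPT}(F)/\mathrm{REV}(A;F)$ (ratios with zero denominator are $+\infty$). The log-lottery $P^{\log}_{\mu,\sigma}$ is the random price supported on $[\pi_1,\pi_2]$ with cdf $x\mapsto\frac{\pi_2\ln(x/\pi_1)-(x-\pi_1)}{\pi_2\ln(\pi_2/\pi_1)-(\pi_2-\pi_1)}$,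 where $0<\pi_1\le\pi_2$ are the unique solutions of $\pi_1(1+\ln(\pi_2/\pi_1))=\mu$ and $\pi_1(2\pi_2-\pi_1)=\mu^2+\sigma^2$ (when $\sigma=0$, $\pi_1=\pi_2=\mu$ and it is the deterministic price $\mu$). *)

theory Defs
  imports "HOL-Probability.Probability"
begin

definition mu_sigma_dist :: "real \<Rightarrow> real \<Rightarrow> real measure \<Rightarrow> bool" where
  "mu_sigma_dist \<mu> \<sigma> F \<longleftrightarrow>
     prob_space F \<and> sets F = sets borel \<and> (AE x in F. 0 \<le> x) \<and>
     integrable F (\<lambda>x. x) \<and> integrable F (\<lambda>x. x\<^sup>2) \<and>
     (\<integral>x. x \<partial>F) = \<mu> \<and> sqrt (\<integral>x. (x - \<mu>)\<^sup>2 \<partial>F) \<le> \<sigma>"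

definition REV_price :: "real \<Rightarrow> real measure \<Rightarrow> real" where
  "REV_price p F = p * measure F {p..}"

definition REV :: "real measure \<Rightarrow> real measure \<Rightarrow> real" where
  "REV A F = (\<integral>p. REV_price p F \<partial>A)"

definition OPT :: "real measure \<Rightarrow> real" where
  "OPT F = (SUP p\<in>{0..}. REV_price p F)"

definition ratio :: "real \<Rightarrow> real \<Rightarrow> ereal" where
  "ratio a b = (if b = 0 then \<infinity> else ereal (a / b))"

text \<open>Mechanisms: probability distributions over nonnegative prices.\<close>
definition price_lottery :: "real measure \<Rightarrow> bool" where
  "price_lottery A \<longleftrightarrow> prob_space A \<and> sets A = sets borel \<and> (AE p in A. 0 \<le> p)"

definition APX :: "real \<Rightarrow> real \<Rightarrow> ereal" where
  "APX \<mu> \<sigma> = (INF A\<in>{A. price_lottery A}.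
                 SUP F\<in>{F. mu_sigma_dist \<mu> \<sigma> F}. ratio (OPT F) (REV A F))"

definition log_pis :: "real \<Rightarrow> real \<Rightarrow> real \<times> real" where
  "log_pis \<mu> \<sigma> = (THE (a, b). 0 < a \<and> a \<le> b \<and> a * (1 + ln (b / a)) = \<mu> \<and>
                                a * (2 * b - a) = \<mu>\<^sup>2 + \<sigma>\<^sup>2)"

text \<open>The cdf of the log-lottery (0 below pi1, 1 from pi2 on; when pi1 = pi2 this is
  the point mass at mu).\<close>
definition log_cdf :: "real \<Rightarrow> real \<Rightarrow> real \<Rightarrow> real" where
  "log_cdf \<mu> \<sigma> x = (let (\<pi>1, \<pi>2) = log_pis \<mu> \<sigma> in
     if x < \<pi>1 then 0
     else if x < \<pi>2 then (\<pi>2 * ln (x / \<pi>1) - (x - \<pi>1)) / (\<pi>2 * ln (\<pi>2 / \<pi>1) - (\<pi>2 - \<pi>1))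
     else 1)"

definition log_lottery :: "real \<Rightarrow> real \<Rightarrow> real measure" where
  "log_lottery \<mu> \<sigma> = interval_measure (log_cdf \<mu> \<sigma>)"

definition rho :: "real \<Rightarrow> real" where
  "rho r = (THE \<rho>. 0 < \<rho> \<and> (2 * exp (\<rho> - 1) - 1) / \<rho>\<^sup>2 = r\<^sup>2 + 1)"

end

theory Submission
  imports Defs "HOL-Real_Asymp.Real_Asymp"
begin

text \<open>
  For \<open>\<sigma> > 0\<close> the log-lottery has density \<open>(\<pi>\<^sub>2 / p - 1) / D\<close> on \<open>[\<pi>\<^sub>1, \<pi>\<^sub>2]\<close>,
  where \<open>D = \<pi>\<^sub>2 ln (\<pi>\<^sub>2 / \<pi>\<^sub>1) - (\<pi>\<^sub>2 - \<pi>\<^sub>1)\<close>. By Fubini its revenue against a buyer with value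
  \<open>X\<close> is \<open>E[Q(clip X)]\<close>, where \<open>clip\<close> projects onto \<open>[\<pi>\<^sub>1, \<pi>\<^sub>2]\<close> and
  \<open>Q y = ((\<pi>\<^sub>2 - \<pi>\<^sub>1)\<^sup>2 - (\<pi>\<^sub>2 - y)\<^sup>2) / (2 D)\<close> is the revenue the lottery collects from value \<open>y\<close>.
  As \<open>Q\<close> increases up to its maximum at \<open>\<pi>\<^sub>2\<close>, \<open>Q(clip X) \<ge> Q X\<close>, so the revenue is at least
  \<open>((\<pi>\<^sub>2 - \<pi>\<^sub>1)\<^sup>2 - E[(\<pi>\<^sub>2 - X)\<^sup>2]) / (2 D) \<ge> ((\<pi>\<^sub>2 - \<pi>\<^sub>1)\<^sup>2 - (\<pi>\<^sub>2 - \<mu>)\<^sup>2 - \<sigma>\<^sup>2) / (2 D)\<close>,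
  and the two equations defining \<open>\<pi>\<^sub>1, \<pi>\<^sub>2\<close> make this bound exactly \<open>\<pi>\<^sub>1 = \<mu> / \<rho>\<close>.
  For \<open>\<sigma> = 0\<close> both the lottery and the value are the point mass at \<open>\<mu>\<close>.
  Finally \<open>OPT \<le> \<mu>\<close> by Markov's inequality, so the ratio is at most \<open>\<rho>\<close>.
\<close>

subsection \<open>The function rho\<close>

lemma diff_one_less_mult_ln:
  fixes t :: real
  assumes "0 < t" "t \<noteq> 1"
  shows "t - 1 < t * ln t"
proof -
  have "ln (1 / t) \<le> 1 / t - 1" "ln (1 / t) \<noteq> 1 / t - 1"
    using assms ln_le_minus_one[of "1 / t"] ln_eq_minus_one[of "1 / t"] by auto
  then have "- ln t < 1 / t - 1" using assms by (simp add: ln_div)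
  then show ?thesis using assms by (simp add: field_simps)
qed

definition rho_lhs :: "real \<Rightarrow> real" where
  "rho_lhs x = (2 * exp (x - 1) - 1) / x\<^sup>2"

lemma rho_lhs_one [simp]: "rho_lhs 1 = 1"
  by (simp add: rho_lhs_def)

lemma rho_lhs_has_derivative:
  fixes x :: real
  assumes "x \<noteq> 0"
  shows "(rho_lhs has_real_derivative 2 * (exp (x - 1) * (x - 2) + 1) / x ^ 3) (at x)"
  unfolding rho_lhs_def[abs_def] using assms
  by (auto intro!: derivative_eq_intros simp: field_simps power2_eq_square power3_eq_cube)

lemma rho_lhs_less_if_one_not_between:
  fixes a b :: real
  assumes "0 < a" "a < b" "1 \<notin> {a<..<b}"
  shows "rho_lhs a < rho_lhs b"
proof (rule DERIV_pos_imp_increasing_open[OF \<open>a < b\<close>])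
  fix x assume x: "a < x" "x < b"
  then have "0 < x" "x \<noteq> 1" using assms by auto
  then have "exp (x - 1) - 1 < exp (x - 1) * (x - 1)"
    using diff_one_less_mult_ln[of "exp (x - 1)"] by simp
  then have "0 < 2 * (exp (x - 1) * (x - 2) + 1) / x ^ 3"
    using \<open>0 < x\<close> by (simp add: algebra_simps)
  then show "\<exists>y. (rho_lhs has_real_derivative y) (at x) \<and> 0 < y"
    using rho_lhs_has_derivative[of x] \<open>0 < x\<close> by auto
next
  show "continuous_on {a..b} rho_lhs"
    unfolding rho_lhs_def using assms by (intro continuous_intros) auto
qed

lemma strict_mono_on_rho_lhs: "strict_mono_on {0<..} rho_lhs"
proof (rule strict_mono_onI)
  fix a b :: real
  assume "a \<in> {0<..}" "a < b"
  show "rho_lhs a < rho_lhs b"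
  proof (cases "1 \<in> {a<..<b}")
    case True
    then have "rho_lhs a < rho_lhs 1" "rho_lhs 1 < rho_lhs b"
      using \<open>a \<in> {0<..}\<close> rho_lhs_less_if_one_not_between[of a 1]
        rho_lhs_less_if_one_not_between[of 1 b]
      by auto
    then show ?thesis by linarith
  qed (use \<open>a \<in> {0<..}\<close> \<open>a < b\<close> rho_lhs_less_if_one_not_between[of a b] in simp)
qed

lemma ex1_rho_lhs_eq:
  fixes c :: real
  assumes "1 \<le> c"
  shows "\<exists>!x. 0 < x \<and> rho_lhs x = c"
proof (rule ex_ex1I)
  have "filterlim rho_lhs at_top at_top"
    unfolding rho_lhs_def by real_asymp
  then have "eventually (\<lambda>x. 1 \<le> x \<and> c \<le> rho_lhs x) at_top"
    by (intro eventually_conj eventually_ge_at_top) (simp add: filterlim_at_top)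
  then obtain N where N: "1 \<le> N" "c \<le> rho_lhs N"
    using eventually_happens by fastforce
  have "continuous_on {1..N} rho_lhs"
    unfolding rho_lhs_def by (intro continuous_intros) auto
  then have "\<exists>x. 1 \<le> x \<and> x \<le> N \<and> rho_lhs x = c"
    using IVT'[of rho_lhs 1 c N] N assms by simp
  then show "\<exists>x. 0 < x \<and> rho_lhs x = c" by (auto intro: less_le_trans[OF zero_less_one])
next
  show "x = y" if "0 < x \<and> rho_lhs x = c" "0 < y \<and> rho_lhs y = c" for x y
    using that inj_onD[OF strict_mono_on_imp_inj_on[OF strict_mono_on_rho_lhs], of x y] by simp
qed

lemma rho_pos: "0 < rho r" and rho_lhs_rho: "rho_lhs (rho r) = r\<^sup>2 + 1"
  using theI'[OF ex1_rho_lhs_eq[of "r\<^sup>2 + 1"]] by (auto simp: rho_def rho_lhs_def[symmetric])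

lemma rho_unique: "0 < x \<Longrightarrow> rho_lhs x = r\<^sup>2 + 1 \<Longrightarrow> rho r = x"
  using ex1_rho_lhs_eq[of "r\<^sup>2 + 1"] rho_pos rho_lhs_rho by auto

lemma rho_zero: "rho 0 = 1"
  by (rule rho_unique) auto

lemma one_le_rho: "1 \<le> rho r"
proof (rule ccontr)
  assume "\<not> 1 \<le> rho r"
  then have "rho_lhs (rho r) < rho_lhs 1"
    using rho_pos strict_mono_onD[OF strict_mono_on_rho_lhs, of "rho r" 1] by auto
  then show False using rho_lhs_rho[of r] by simp
qed

lemma one_less_rho: "r \<noteq> 0 \<Longrightarrow> 1 < rho r"
  using one_le_rho[of r] rho_lhs_rho[of r] by (cases "rho r = 1") auto

subsection \<open>The parameters of the log-lottery\<close>

lemma rho_lhs_scaled: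
  fixes a x :: real
  assumes "x \<noteq> 0"
  shows "a * (2 * (a * exp (x - 1)) - a) = (a * x)\<^sup>2 * rho_lhs x"
  using assms by (simp add: rho_lhs_def field_simps power2_eq_square)

lemma rho_solves_second_log_pis_eq:
  fixes \<mu> \<sigma> :: real
  assumes "\<mu> \<noteq> 0"
  defines "\<rho> \<equiv> rho (\<sigma> / \<mu>)"
  shows "\<mu> / \<rho> * (2 * (\<mu> / \<rho> * exp (\<rho> - 1)) - \<mu> / \<rho>) = \<mu>\<^sup>2 + \<sigma>\<^sup>2"
proof -
  have "\<rho> \<noteq> 0"
    using rho_pos[of "\<sigma> / \<mu>"] by (simp add: \<rho>_def)
  have "\<mu> / \<rho> * (2 * (\<mu> / \<rho> * exp (\<rho> - 1)) - \<mu> / \<rho>) = \<mu>\<^sup>2 * ((\<sigma> / \<mu>)\<^sup>2 + 1)"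
    using rho_lhs_scaled[OF \<open>\<rho> \<noteq> 0\<close>, of "\<mu> / \<rho>"] rho_lhs_rho[of "\<sigma> / \<mu>"] \<open>\<rho> \<noteq> 0\<close>
    by (simp add: \<rho>_def)
  also have "\<dots> = \<mu>\<^sup>2 + \<sigma>\<^sup>2"
    using assms by (simp add: field_simps power2_eq_square)
  finally show ?thesis .
qed

lemma log_pis_eq:
  fixes \<mu> \<sigma> :: real
  assumes "0 < \<mu>"
  defines "\<rho> \<equiv> rho (\<sigma> / \<mu>)"
  shows "log_pis \<mu> \<sigma> = (\<mu> / \<rho>, \<mu> / \<rho> * exp (\<rho> - 1))"
proof -
  have "1 \<le> \<rho>" by (simp add: \<rho>_def one_le_rho)
  have solution: "0 < \<mu> / \<rho> \<and> \<mu> / \<rho> \<le> \<mu> / \<rho> * exp (\<rho> - 1) \<and>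
      \<mu> / \<rho> * (1 + ln (\<mu> / \<rho> * exp (\<rho> - 1) / (\<mu> / \<rho>))) = \<mu> \<and>
      \<mu> / \<rho> * (2 * (\<mu> / \<rho> * exp (\<rho> - 1)) - \<mu> / \<rho>) = \<mu>\<^sup>2 + \<sigma>\<^sup>2"
    using \<open>1 \<le> \<rho>\<close> assms rho_solves_second_log_pis_eq[of \<mu> \<sigma>]
      mult_left_mono[of 1 "exp (\<rho> - 1)" "\<mu> / \<rho>"]
    by simp
  have unique: "a = \<mu> / \<rho> \<and> b = \<mu> / \<rho> * exp (\<rho> - 1)"
    if a: "0 < a" "a \<le> b" "a * (1 + ln (b / a)) = \<mu>" "a * (2 * b - a) = \<mu>\<^sup>2 + \<sigma>\<^sup>2" for a b
  proof -
    define x where "x = 1 + ln (b / a)"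
    have "1 \<le> x" using a by (simp add: x_def)
    have \<mu>: "\<mu> = a * x" and b: "b = a * exp (x - 1)"
      using a by (simp_all add: x_def)
    have "\<mu>\<^sup>2 * rho_lhs x = \<mu>\<^sup>2 * ((\<sigma> / \<mu>)\<^sup>2 + 1)"
      using a(4) rho_lhs_scaled[of x a] \<open>1 \<le> x\<close> assms(1)
      by (simp add: b \<mu>[symmetric] field_simps power2_eq_square)
    then have "\<rho> = x"
      unfolding \<rho>_def using assms \<open>1 \<le> x\<close> by (intro rho_unique) auto
    then show ?thesis
      using \<open>1 \<le> x\<close> by (simp add: \<mu> b)
  qed
  show ?thesis
    unfolding log_pis_def by (rule the_equality) (use solution unique in auto)
qed

lemma REV_eq_expectation:
  assumes A: "prob_space A" "sets A = sets borel" "integrable A (\<lambda>p. p)"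
    and F: "prob_space F" "sets F = sets borel"
  shows "REV A F = (\<integral>x. (\<integral>p. p * indicator {..x} p \<partial>A) \<partial>F)"
proof -
  interpret A: prob_space A by fact
  interpret F: prob_space F by fact
  interpret pair_sigma_finite A F ..
  have [measurable_cong]: "sets A = sets borel" "sets F = sets borel"
    using A F by simp_all
  define f where "f p x = p * indicator {..x} p" for p x :: real
  have [measurable]: "Measurable.pred (A \<Otimes>\<^sub>M F) (\<lambda>w. fst w \<in> {..snd w})"
    by simp measurable
  have [measurable]: "case_prod f \<in> borel_measurable (A \<Otimes>\<^sub>M F)"
    unfolding f_def by measurable
  have f_eq: "f p x = p * indicator {p..} x" for p x
    by (simp add: f_def split: split_indicator)
  have inner: "(\<integral>x. f p x \<partial>F) = REV_price p F" for p
    using F by (simp add: f_eq REV_price_def)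
  have "integrable (A \<Otimes>\<^sub>M F) (case_prod f)"
  proof (rule Fubini_integrable)
    show "integrable A (\<lambda>p. \<integral>x. norm (case_prod f (p, x)) \<partial>F)"
    proof (rule Bochner_Integration.integrable_bound)
      show "integrable A (\<lambda>p. norm p)"
        using A by simp
      show "AE p in A. norm (\<integral>x. norm (case_prod f (p, x)) \<partial>F) \<le> norm (norm p)"
        using F by (intro AE_I2) (simp add: f_eq abs_mult F.prob_le_1 mult_left_le)
    qed measurable
    show "AE p in A. integrable F (\<lambda>x. case_prod f (p, x))"
      using F by (simp add: f_eq integrable_indicator_iff F.emeasure_finite less_top[symmetric])
  qed measurable
  then have "(\<integral>p. (\<integral>x. f p x \<partial>F) \<partial>A) = (\<integral>x. (\<integral>p. f p x \<partial>A) \<partial>F)"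
    by (rule Fubini_integral[symmetric])
  then show ?thesis
    unfolding REV_def inner[symmetric] f_def .
qed

lemma REV_return:
  assumes "prob_space F" "sets F = sets borel"
  shows "REV (return borel c) F = REV_price c F"
proof -
  interpret R: prob_space "return borel c"
    by (simp add: prob_space_return)
  have "integrable (return borel c) (\<lambda>p. p)"
    by (rule R.integrable_const_bound[where B = "\<bar>c\<bar>"]) (simp_all add: AE_return)
  then have "REV (return borel c) F = (\<integral>x. (\<integral>p. p * indicator {..x} p \<partial>return borel c) \<partial>F)"
    using assms by (intro REV_eq_expectation) (simp_all add: prob_space_return)
  also have "\<dots> = (\<integral>x. c * indicator {c..} x \<partial>F)"
    by (intro Bochner_Integration.integral_cong) (auto simp: integral_return split: split_indicator)
  also have "\<dots> = REV_price c F"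
    using assms by (simp add: REV_price_def)
  finally show ?thesis .
qed

subsection \<open>The log-lottery density\<close>

lemma integral_indicator_FTC:
  fixes f F :: "real \<Rightarrow> real"
  assumes "a \<le> b"
    and "\<And>x. a \<le> x \<Longrightarrow> x \<le> b \<Longrightarrow> (F has_real_derivative f x) (at x)"
    and "continuous_on {a..b} f"
  shows "(\<integral>x. indicator {a..b} x * f x \<partial>lborel) = F b - F a"
  using integral_FTC_atLeastAtMost[of a b F f] assms
  by (simp add: has_real_derivative_iff_has_vector_derivative[symmetric]
      has_field_derivative_at_within)

lemma integrable_power2_diff:
  fixes c :: real
  assumes "finite_measure F" "integrable F (\<lambda>x. x)" "integrable F (\<lambda>x. x\<^sup>2)"
  shows "integrable F (\<lambda>x. (c - x)\<^sup>2)"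
proof -
  have "(\<lambda>x. (c - x)\<^sup>2) = (\<lambda>x. c\<^sup>2 - 2 * c * x + x\<^sup>2)"
    by (simp add: power2_eq_square algebra_simps)
  then show ?thesis
    using assms by (simp add: finite_measure.integrable_const)
qed

definition log_norm :: "real \<Rightarrow> real \<Rightarrow> real" where
  "log_norm \<pi>\<^sub>1 \<pi>\<^sub>2 = \<pi>\<^sub>2 * ln (\<pi>\<^sub>2 / \<pi>\<^sub>1) - (\<pi>\<^sub>2 - \<pi>\<^sub>1)"

text \<open>The derivative of \<open>log_cdf\<close> on \<open>[\<pi>\<^sub>1, \<pi>\<^sub>2]\<close>; \<open>log_norm\<close> is the denominator in \<open>log_cdf\<close>.\<close>

definition log_density :: "real \<Rightarrow> real \<Rightarrow> real \<Rightarrow> real" where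
  "log_density \<pi>\<^sub>1 \<pi>\<^sub>2 p = indicator {\<pi>\<^sub>1..\<pi>\<^sub>2} p * ((\<pi>\<^sub>2 / p - 1) / log_norm \<pi>\<^sub>1 \<pi>\<^sub>2)"

lemma borel_measurable_log_density [measurable]: "log_density \<pi>\<^sub>1 \<pi>\<^sub>2 \<in> borel_measurable borel"
  unfolding log_density_def by measurable

context
  fixes \<pi>\<^sub>1 \<pi>\<^sub>2 :: real
  assumes pos: "0 < \<pi>\<^sub>1" and less: "\<pi>\<^sub>1 < \<pi>\<^sub>2"
begin

lemma log_norm_pos: "0 < log_norm \<pi>\<^sub>1 \<pi>\<^sub>2"
proof -
  define t where "t = \<pi>\<^sub>2 / \<pi>\<^sub>1"
  have "t - 1 < t * ln t"
    using pos less by (intro diff_one_less_mult_ln) (auto simp: t_def)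
  moreover have "log_norm \<pi>\<^sub>1 \<pi>\<^sub>2 = \<pi>\<^sub>1 * (t * ln t - (t - 1))"
    using pos by (simp add: log_norm_def t_def field_simps)
  ultimately show ?thesis using pos by simp
qed

lemma log_density_nonneg: "0 \<le> log_density \<pi>\<^sub>1 \<pi>\<^sub>2 p"
  using pos log_norm_pos
  by (auto simp: log_density_def field_simps split: split_indicator)

lemma integral_log_density_atMost:
  "(\<integral>p. log_density \<pi>\<^sub>1 \<pi>\<^sub>2 p * indicator {..x} p \<partial>lborel) =
     (if x < \<pi>\<^sub>1 then 0
      else if x < \<pi>\<^sub>2 then (\<pi>\<^sub>2 * ln (x / \<pi>\<^sub>1) - (x - \<pi>\<^sub>1)) / log_norm \<pi>\<^sub>1 \<pi>\<^sub>2
      else 1)"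
proof (cases "x < \<pi>\<^sub>1")
  case False
  define m where "m = min x \<pi>\<^sub>2"
  define C where "C y = (\<pi>\<^sub>2 * ln (y / \<pi>\<^sub>1) - (y - \<pi>\<^sub>1)) / log_norm \<pi>\<^sub>1 \<pi>\<^sub>2" for y
  have "(\<lambda>p. log_density \<pi>\<^sub>1 \<pi>\<^sub>2 p * indicator {..x} p) =
      (\<lambda>p. indicator {\<pi>\<^sub>1..m} p * ((\<pi>\<^sub>2 / p - 1) / log_norm \<pi>\<^sub>1 \<pi>\<^sub>2))"
    by (auto simp: log_density_def m_def split: split_indicator)
  moreover have "(\<integral>p. indicator {\<pi>\<^sub>1..m} p * ((\<pi>\<^sub>2 / p - 1) / log_norm \<pi>\<^sub>1 \<pi>\<^sub>2) \<partial>lborel) = C m - C \<pi>\<^sub>1"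
    using False pos less log_norm_pos unfolding C_def m_def
    by (intro integral_indicator_FTC)
      (auto intro!: derivative_eq_intros continuous_intros simp: field_simps)
  moreover have "C \<pi>\<^sub>2 = 1"
    using log_norm_pos by (simp add: C_def log_norm_def)
  ultimately show ?thesis
    using False by (auto simp: m_def C_def)
next
  case True
  then have "(\<lambda>p. log_density \<pi>\<^sub>1 \<pi>\<^sub>2 p * indicator {..x} p) = (\<lambda>_. 0)"
    by (auto simp: log_density_def split: split_indicator)
  then show ?thesis using True by simp
qed

lemma integral_log_density_revenue:
  "(\<integral>p. log_density \<pi>\<^sub>1 \<pi>\<^sub>2 p * (p * indicator {..x} p) \<partial>lborel) =
     ((\<pi>\<^sub>2 - \<pi>\<^sub>1)\<^sup>2 - (\<pi>\<^sub>2 - max \<pi>\<^sub>1 (min x \<pi>\<^sub>2))\<^sup>2) / (2 * log_norm \<pi>\<^sub>1 \<pi>\<^sub>2)"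
proof (cases "x < \<pi>\<^sub>1")
  case False
  define m where "m = min x \<pi>\<^sub>2"
  define Q where "Q y = ((\<pi>\<^sub>2 - \<pi>\<^sub>1)\<^sup>2 - (\<pi>\<^sub>2 - y)\<^sup>2) / (2 * log_norm \<pi>\<^sub>1 \<pi>\<^sub>2)" for y
  have "(\<lambda>p. log_density \<pi>\<^sub>1 \<pi>\<^sub>2 p * (p * indicator {..x} p)) =
      (\<lambda>p. indicator {\<pi>\<^sub>1..m} p * ((\<pi>\<^sub>2 - p) / log_norm \<pi>\<^sub>1 \<pi>\<^sub>2))"
    using pos log_norm_pos
    by (auto simp: log_density_def m_def field_simps split: split_indicator)
  moreover have "(\<integral>p. indicator {\<pi>\<^sub>1..m} p * ((\<pi>\<^sub>2 - p) / log_norm \<pi>\<^sub>1 \<pi>\<^sub>2) \<partial>lborel) = Q m - Q \<pi>\<^sub>1"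
    using False less log_norm_pos unfolding Q_def m_def
    by (intro integral_indicator_FTC)
      (auto intro!: derivative_eq_intros continuous_intros simp: field_simps)
  ultimately show ?thesis
    using False less by (simp add: m_def Q_def)
next
  case True
  then have "(\<lambda>p. log_density \<pi>\<^sub>1 \<pi>\<^sub>2 p * (p * indicator {..x} p)) = (\<lambda>_. 0)"
    by (auto simp: log_density_def split: split_indicator)
  then show ?thesis using True by simp
qed

lemma integrable_log_density: "integrable lborel (\<lambda>p. log_density \<pi>\<^sub>1 \<pi>\<^sub>2 p * f p)"
  if "continuous_on {\<pi>\<^sub>1..\<pi>\<^sub>2} f" for f :: "real \<Rightarrow> real"
proof -
  have "integrable lborel (\<lambda>p. indicator {\<pi>\<^sub>1..\<pi>\<^sub>2} p *\<^sub>R ((\<pi>\<^sub>2 / p - 1) / log_norm \<pi>\<^sub>1 \<pi>\<^sub>2 * f p))"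
    using pos log_norm_pos by (intro borel_integrable_compact continuous_intros that) auto
  then show ?thesis
    by (simp add: log_density_def mult_ac)
qed

lemma prob_space_log_density: "prob_space (density lborel (log_density \<pi>\<^sub>1 \<pi>\<^sub>2))"
proof
  have "(\<lambda>p. log_density \<pi>\<^sub>1 \<pi>\<^sub>2 p * indicator {..\<pi>\<^sub>2} p) = log_density \<pi>\<^sub>1 \<pi>\<^sub>2"
    by (auto simp: log_density_def split: split_indicator)
  then have "(\<integral>p. log_density \<pi>\<^sub>1 \<pi>\<^sub>2 p \<partial>lborel) = 1"
    using integral_log_density_atMost[of \<pi>\<^sub>2] less by simp
  moreover have "integrable lborel (log_density \<pi>\<^sub>1 \<pi>\<^sub>2)"
    using integrable_log_density[of "\<lambda>_. 1"] by simp
  ultimately show "emeasure (density lborel (log_density \<pi>\<^sub>1 \<pi>\<^sub>2))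
      (space (density lborel (log_density \<pi>\<^sub>1 \<pi>\<^sub>2))) = 1"
    by (simp add: emeasure_density nn_integral_eq_integral log_density_nonneg)
qed

lemma cdf_log_density:
  "cdf (density lborel (log_density \<pi>\<^sub>1 \<pi>\<^sub>2)) x =
     (if x < \<pi>\<^sub>1 then 0
      else if x < \<pi>\<^sub>2 then (\<pi>\<^sub>2 * ln (x / \<pi>\<^sub>1) - (x - \<pi>\<^sub>1)) / log_norm \<pi>\<^sub>1 \<pi>\<^sub>2
      else 1)"
proof -
  interpret prob_space "density lborel (log_density \<pi>\<^sub>1 \<pi>\<^sub>2)"
    by (rule prob_space_log_density)
  have "cdf (density lborel (log_density \<pi>\<^sub>1 \<pi>\<^sub>2)) x =
      (\<integral>p. indicator {..x} p \<partial>density lborel (log_density \<pi>\<^sub>1 \<pi>\<^sub>2))"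
    by (simp add: cdf_def)
  also have "\<dots> = (\<integral>p. log_density \<pi>\<^sub>1 \<pi>\<^sub>2 p * indicator {..x} p \<partial>lborel)"
    by (subst integral_density) (auto simp: log_density_nonneg)
  finally show ?thesis
    by (simp add: integral_log_density_atMost)
qed

lemma REV_log_density_ge:
  assumes F: "prob_space F" "sets F = sets borel" "integrable F (\<lambda>x. x)" "integrable F (\<lambda>x. x\<^sup>2)"
  shows "((\<pi>\<^sub>2 - \<pi>\<^sub>1)\<^sup>2 - (\<integral>x. (\<pi>\<^sub>2 - x)\<^sup>2 \<partial>F)) / (2 * log_norm \<pi>\<^sub>1 \<pi>\<^sub>2)
    \<le> REV (density lborel (log_density \<pi>\<^sub>1 \<pi>\<^sub>2)) F"
proof -
  interpret F: prob_space F by fact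
  have [measurable_cong]: "sets F = sets borel" by fact
  define Q where "Q y = ((\<pi>\<^sub>2 - \<pi>\<^sub>1)\<^sup>2 - (\<pi>\<^sub>2 - y)\<^sup>2) / (2 * log_norm \<pi>\<^sub>1 \<pi>\<^sub>2)" for y
  define clip where "clip x = max \<pi>\<^sub>1 (min x \<pi>\<^sub>2)" for x
  have integrable_id: "integrable (density lborel (log_density \<pi>\<^sub>1 \<pi>\<^sub>2)) (\<lambda>p. p)"
    using integrable_log_density[of "\<lambda>p. p"]
    by (subst integrable_density) (auto simp: log_density_nonneg continuous_on_id)
  have inner: "(\<integral>p. p * indicator {..x} p \<partial>density lborel (log_density \<pi>\<^sub>1 \<pi>\<^sub>2)) = Q (clip x)" for x
    by (subst integral_density)
      (auto simp: log_density_nonneg Q_def clip_def integral_log_density_revenue)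
  have clip_closer: "(\<pi>\<^sub>2 - clip x)\<^sup>2 \<le> (\<pi>\<^sub>2 - x)\<^sup>2"
    and clip_bounded: "(\<pi>\<^sub>2 - clip x)\<^sup>2 \<le> (\<pi>\<^sub>2 - \<pi>\<^sub>1)\<^sup>2" for x
    using less by (auto simp: clip_def abs_le_square_iff[symmetric] max_def min_def)
  have "integrable F (\<lambda>x. Q (clip x))"
  proof (rule F.integrable_const_bound)
    show "AE x in F. norm (Q (clip x)) \<le> (\<pi>\<^sub>2 - \<pi>\<^sub>1)\<^sup>2 / (2 * log_norm \<pi>\<^sub>1 \<pi>\<^sub>2)"
      using clip_bounded log_norm_pos by (intro AE_I2) (auto simp: Q_def divide_right_mono)
  qed (simp add: Q_def clip_def)
  then have "(\<integral>x. Q x \<partial>F) \<le> (\<integral>x. Q (clip x) \<partial>F)"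
    using clip_closer log_norm_pos integrable_power2_diff[of F \<pi>\<^sub>2] F
    by (intro integral_mono) (auto simp: Q_def divide_right_mono F.finite_measure_axioms)
  also have "\<dots> = REV (density lborel (log_density \<pi>\<^sub>1 \<pi>\<^sub>2)) F"
    using REV_eq_expectation[OF prob_space_log_density _ integrable_id F(1,2)] by (simp add: inner)
  finally show ?thesis
    using integrable_power2_diff[of F \<pi>\<^sub>2] F
    by (simp add: Q_def F.finite_measure_axioms F.prob_space)
qed

end

subsection \<open>(\<mu>, \<sigma>)-distributed values\<close>

lemma mu_sigma_distD:
  assumes "mu_sigma_dist \<mu> \<sigma> F"
  shows "prob_space F" "sets F = sets borel" "AE x in F. 0 \<le> x"
    "integrable F (\<lambda>x. x)" "integrable F (\<lambda>x. x\<^sup>2)" "(\<integral>x. x \<partial>F) = \<mu>"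
  using assms by (simp_all add: mu_sigma_dist_def)

lemma mu_sigma_dist_integral_power2_diff_le:
  fixes c :: real
  assumes "mu_sigma_dist \<mu> \<sigma> F"
  shows "(\<integral>x. (c - x)\<^sup>2 \<partial>F) \<le> (c - \<mu>)\<^sup>2 + \<sigma>\<^sup>2"
proof -
  note F = mu_sigma_distD[OF assms]
  interpret prob_space F by fact
  have integrable: "integrable F (\<lambda>x. (y - x)\<^sup>2)" for y
    using F finite_measure_axioms by (intro integrable_power2_diff)
  have "(\<lambda>x. (c - x)\<^sup>2) = (\<lambda>x. (\<mu> - x)\<^sup>2 + 2 * (\<mu> - c) * x + (c\<^sup>2 - \<mu>\<^sup>2))"
    by (simp add: power2_eq_square algebra_simps)
  then have "(\<integral>x. (c - x)\<^sup>2 \<partial>F) = (\<integral>x. (\<mu> - x)\<^sup>2 \<partial>F) + (c - \<mu>)\<^sup>2"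
    using integrable F by (simp add: prob_space power2_eq_square algebra_simps)
  moreover have "(\<integral>x. (\<mu> - x)\<^sup>2 \<partial>F) \<le> \<sigma>\<^sup>2"
  proof -
    have "sqrt (\<integral>x. (\<mu> - x)\<^sup>2 \<partial>F) \<le> \<sigma>"
      using assms by (simp add: mu_sigma_dist_def power2_commute)
    then have "(sqrt (\<integral>x. (\<mu> - x)\<^sup>2 \<partial>F))\<^sup>2 \<le> \<sigma>\<^sup>2"
      by (intro power_mono) auto
    moreover have "0 \<le> (\<integral>x. (\<mu> - x)\<^sup>2 \<partial>F)"
      by (intro integral_nonneg_AE) simp
    ultimately show ?thesis by simp
  qed
  ultimately show ?thesis by simp
qed

lemma mu_sigma_dist_zero_AE:
  assumes "mu_sigma_dist \<mu> 0 F"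
  shows "AE x in F. x = \<mu>"
proof -
  note F = mu_sigma_distD[OF assms]
  interpret prob_space F by fact
  have nonneg: "AE x in F. 0 \<le> (\<mu> - x)\<^sup>2"
    by simp
  have integrable: "integrable F (\<lambda>x. (\<mu> - x)\<^sup>2)"
    using F finite_measure_axioms by (intro integrable_power2_diff)
  have "(\<integral>x. (\<mu> - x)\<^sup>2 \<partial>F) \<le> 0"
    using mu_sigma_dist_integral_power2_diff_le[OF assms, of \<mu>] by simp
  then have "(\<integral>x. (\<mu> - x)\<^sup>2 \<partial>F) = 0"
    using integral_nonneg_AE[OF nonneg] by linarith
  then have "AE x in F. (\<mu> - x)\<^sup>2 = 0"
    unfolding integral_nonneg_eq_0_iff_AE[OF integrable nonneg] .
  then show ?thesis
    by eventually_elim simp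
qed

lemma REV_price_le_mean:
  assumes "mu_sigma_dist \<mu> \<sigma> F" "0 \<le> p"
  shows "REV_price p F \<le> \<mu>"
proof -
  note F = mu_sigma_distD[OF assms(1)]
  interpret prob_space F by fact
  have "REV_price p F = (\<integral>x. p * indicator {p..} x \<partial>F)"
    using F by (simp add: REV_price_def)
  also have "\<dots> \<le> (\<integral>x. x \<partial>F)"
  proof (rule integral_mono_AE)
    show "integrable F (\<lambda>x. p * indicator {p..} x)"
      using F by (simp add: integrable_indicator_iff emeasure_finite less_top[symmetric])
    show "AE x in F. p * indicator {p..} x \<le> x"
      using F(3) by eventually_elim (use assms(2) in \<open>auto split: split_indicator\<close>)
  qed (fact F(4))
  finally show ?thesis using F by simp
qed

lemma OPT_le_mean: "mu_sigma_dist \<mu> \<sigma> F \<Longrightarrow> OPT F \<le> \<mu>"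
  unfolding OPT_def by (rule cSUP_least) (auto intro: REV_price_le_mean)

subsection \<open>The revenue guarantee of the log-lottery\<close>

lemma interval_measure_cdf:
  assumes "real_distribution M"
  shows "interval_measure (cdf M) = M"
proof -
  interpret real_distribution M by fact
  have "real_distribution (interval_measure (cdf M))"
    by (intro real_distribution_interval_measure cdf_nondecreasing cdf_is_right_cont
        cdf_lim_at_bot cdf_lim_at_top_prob)
  moreover have "cdf (interval_measure (cdf M)) = cdf M"
    by (intro cdf_interval_measure cdf_nondecreasing cdf_is_right_cont cdf_lim_at_bot)
  ultimately show ?thesis
    using cdf_unique assms by blast
qed

lemma log_lottery_eq_return:
  assumes "log_pis \<mu> \<sigma> = (c, c)"
  shows "log_lottery \<mu> \<sigma> = return borel c"
proof -
  have "log_cdf \<mu> \<sigma> = cdf (return borel c)"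
    using assms by (auto simp: log_cdf_def cdf_def measure_return split: split_indicator)
  moreover have "real_distribution (return borel c)"
    by (simp add: real_distribution_def real_distribution_axioms_def prob_space_return)
  ultimately show ?thesis
    unfolding log_lottery_def by (simp add: interval_measure_cdf)
qed

lemma log_lottery_eq_density:
  assumes "log_pis \<mu> \<sigma> = (\<pi>\<^sub>1, \<pi>\<^sub>2)" "0 < \<pi>\<^sub>1" "\<pi>\<^sub>1 < \<pi>\<^sub>2"
  shows "log_lottery \<mu> \<sigma> = density lborel (log_density \<pi>\<^sub>1 \<pi>\<^sub>2)"
proof -
  have "log_cdf \<mu> \<sigma> = cdf (density lborel (log_density \<pi>\<^sub>1 \<pi>\<^sub>2))"
    unfolding log_cdf_def assms(1) cdf_log_density[OF assms(2,3), abs_def] log_norm_def by simp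
  moreover have "real_distribution (density lborel (log_density \<pi>\<^sub>1 \<pi>\<^sub>2))"
    using prob_space_log_density[OF assms(2,3)]
    by (simp add: real_distribution_def real_distribution_axioms_def)
  ultimately show ?thesis
    unfolding log_lottery_def by (simp add: interval_measure_cdf)
qed

lemma REV_log_density_ge_left_endpoint:
  assumes "0 < \<pi>\<^sub>1" "\<pi>\<^sub>1 < \<pi>\<^sub>2" "mu_sigma_dist \<mu> \<sigma> F"
    and "\<pi>\<^sub>1 * (1 + ln (\<pi>\<^sub>2 / \<pi>\<^sub>1)) = \<mu>" "\<pi>\<^sub>1 * (2 * \<pi>\<^sub>2 - \<pi>\<^sub>1) = \<mu>\<^sup>2 + \<sigma>\<^sup>2"
  shows "\<pi>\<^sub>1 \<le> REV (density lborel (log_density \<pi>\<^sub>1 \<pi>\<^sub>2)) F"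
proof -
  note F = mu_sigma_distD[OF assms(3)]
  have "(\<pi>\<^sub>2 - \<pi>\<^sub>1)\<^sup>2 - ((\<pi>\<^sub>2 - \<mu>)\<^sup>2 + \<sigma>\<^sup>2) = 2 * \<pi>\<^sub>1 * log_norm \<pi>\<^sub>1 \<pi>\<^sub>2"
    using assms(4,5) unfolding log_norm_def
    by (simp add: algebra_simps power2_eq_square flip: assms(4))
  then have "\<pi>\<^sub>1 = ((\<pi>\<^sub>2 - \<pi>\<^sub>1)\<^sup>2 - ((\<pi>\<^sub>2 - \<mu>)\<^sup>2 + \<sigma>\<^sup>2)) / (2 * log_norm \<pi>\<^sub>1 \<pi>\<^sub>2)"
    using log_norm_pos[OF assms(1,2)] by simp
  also have "\<dots> \<le> ((\<pi>\<^sub>2 - \<pi>\<^sub>1)\<^sup>2 - (\<integral>x. (\<pi>\<^sub>2 - x)\<^sup>2 \<partial>F)) / (2 * log_norm \<pi>\<^sub>1 \<pi>\<^sub>2)"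
    using log_norm_pos[OF assms(1,2)] mu_sigma_dist_integral_power2_diff_le[OF assms(3), of \<pi>\<^sub>2]
    by (intro divide_right_mono) auto
  also have "\<dots> \<le> REV (density lborel (log_density \<pi>\<^sub>1 \<pi>\<^sub>2)) F"
    using F by (intro REV_log_density_ge assms(1,2))
  finally show ?thesis .
qed

lemma log_lottery_cases:
  fixes \<mu> \<sigma> :: real
  assumes "0 < \<mu>"
  obtains (point_mass) "\<sigma> = 0" "log_lottery \<mu> \<sigma> = return borel \<mu>"
  | (density) \<pi>\<^sub>1 \<pi>\<^sub>2 where "0 < \<pi>\<^sub>1" "\<pi>\<^sub>1 < \<pi>\<^sub>2" "\<pi>\<^sub>1 = \<mu> / rho (\<sigma> / \<mu>)"
      "log_lottery \<mu> \<sigma> = density lborel (log_density \<pi>\<^sub>1 \<pi>\<^sub>2)"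
      "\<pi>\<^sub>1 * (1 + ln (\<pi>\<^sub>2 / \<pi>\<^sub>1)) = \<mu>" "\<pi>\<^sub>1 * (2 * \<pi>\<^sub>2 - \<pi>\<^sub>1) = \<mu>\<^sup>2 + \<sigma>\<^sup>2"
proof (cases "\<sigma> = 0")
  case True
  then have "log_pis \<mu> \<sigma> = (\<mu>, \<mu>)"
    using log_pis_eq[OF assms] by (simp add: rho_zero)
  then show ?thesis
    using True by (intro point_mass log_lottery_eq_return)
next
  case False
  define \<rho> where "\<rho> = rho (\<sigma> / \<mu>)"
  have "1 < \<rho>"
    using False assms by (simp add: \<rho>_def one_less_rho)
  define \<pi>\<^sub>1 \<pi>\<^sub>2 where "\<pi>\<^sub>1 = \<mu> / \<rho>" and "\<pi>\<^sub>2 = \<mu> / \<rho> * exp (\<rho> - 1)"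
  have "\<mu> * 1 < \<mu> * exp (\<rho> - 1)"
    using \<open>1 < \<rho>\<close> assms by (intro mult_strict_left_mono) auto
  then have "0 < \<pi>\<^sub>1" "\<pi>\<^sub>1 < \<pi>\<^sub>2"
    using \<open>1 < \<rho>\<close> assms by (simp_all add: \<pi>\<^sub>1_def \<pi>\<^sub>2_def divide_strict_right_mono)
  moreover have "log_pis \<mu> \<sigma> = (\<pi>\<^sub>1, \<pi>\<^sub>2)"
    using log_pis_eq[OF assms] by (simp add: \<pi>\<^sub>1_def \<pi>\<^sub>2_def \<rho>_def)
  moreover have "\<pi>\<^sub>1 * (1 + ln (\<pi>\<^sub>2 / \<pi>\<^sub>1)) = \<mu>"
    using \<open>0 < \<pi>\<^sub>1\<close> \<open>1 < \<rho>\<close> by (simp add: \<pi>\<^sub>1_def \<pi>\<^sub>2_def)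
  moreover have "\<pi>\<^sub>1 * (2 * \<pi>\<^sub>2 - \<pi>\<^sub>1) = \<mu>\<^sup>2 + \<sigma>\<^sup>2"
    using rho_solves_second_log_pis_eq[of \<mu> \<sigma>] assms by (simp add: \<pi>\<^sub>1_def \<pi>\<^sub>2_def \<rho>_def)
  ultimately show ?thesis
    by (intro density[of \<pi>\<^sub>1 \<pi>\<^sub>2] log_lottery_eq_density) (simp_all add: \<pi>\<^sub>1_def \<rho>_def)
qed

lemma price_lottery_log_lottery:
  assumes "0 < \<mu>"
  shows "price_lottery (log_lottery \<mu> \<sigma>)"
  using assms
proof (cases rule: log_lottery_cases[of \<mu> \<sigma>])
  case point_mass
  then show ?thesis
    using assms by (simp add: price_lottery_def prob_space_return AE_return)
next
  case (density \<pi>\<^sub>1 \<pi>\<^sub>2)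
  have "AE p in density lborel (log_density \<pi>\<^sub>1 \<pi>\<^sub>2). 0 \<le> p"
    using density(1) by (subst AE_density) (auto simp: log_density_def split: split_indicator)
  then show ?thesis
    using density(1,2,4) by (simp add: price_lottery_def prob_space_log_density)
qed

lemma REV_log_lottery_ge:
  assumes "0 < \<mu>" "mu_sigma_dist \<mu> \<sigma> F"
  shows "\<mu> / rho (\<sigma> / \<mu>) \<le> REV (log_lottery \<mu> \<sigma>) F"
  using assms(1)
proof (cases rule: log_lottery_cases[of \<mu> \<sigma>])
  case point_mass
  note F = mu_sigma_distD[OF assms(2)]
  interpret prob_space F by fact
  have "AE x in F. x = \<mu>"
    using mu_sigma_dist_zero_AE assms(2) point_mass(1) by simp
  then have "AE x in F. x \<in> {\<mu>..}"
    by eventually_elim simp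
  then have "measure F {\<mu>..} = 1"
    using F by (subst AE_in_set_eq_1[symmetric]) auto
  then show ?thesis
    using point_mass F by (simp add: REV_return REV_price_def rho_zero)
next
  case (density \<pi>\<^sub>1 \<pi>\<^sub>2)
  then show ?thesis
    using REV_log_density_ge_left_endpoint[OF _ _ assms(2)] by simp
qed

lemma ratio_le_divide:
  assumes "a \<le> c" "0 \<le> c" "0 < d" "d \<le> b"
  shows "ratio a b \<le> ereal (c / d)"
proof -
  have "a / b \<le> c / b"
    using assms by (intro divide_right_mono) auto
  also have "\<dots> \<le> c / d"
    using assms by (intro divide_left_mono) auto
  finally show ?thesis
    using assms by (simp add: ratio_def)
qed

theorem theorem2:
  fixes \<mu> \<sigma> :: real
  assumes "0 < \<mu>" and "0 \<le> \<sigma>"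
  shows "(\<forall>F. mu_sigma_dist \<mu> \<sigma> F \<longrightarrow>
            ratio (OPT F) (REV (log_lottery \<mu> \<sigma>) F) \<le> ereal (rho (\<sigma> / \<mu>)))
         \<and> APX \<mu> \<sigma> \<le> ereal (rho (\<sigma> / \<mu>))"
proof -
  have guarantee: "ratio (OPT F) (REV (log_lottery \<mu> \<sigma>) F) \<le> ereal (rho (\<sigma> / \<mu>))"
    if "mu_sigma_dist \<mu> \<sigma> F" for F
  proof -
    have "ratio (OPT F) (REV (log_lottery \<mu> \<sigma>) F) \<le> ereal (\<mu> / (\<mu> / rho (\<sigma> / \<mu>)))"
      using assms(1) rho_pos that
      by (intro ratio_le_divide OPT_le_mean REV_log_lottery_ge divide_pos_pos) auto
    then show ?thesis
      using assms(1) by simp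
  qed
  have "APX \<mu> \<sigma> \<le> ereal (rho (\<sigma> / \<mu>))"
    unfolding APX_def
    using price_lottery_log_lottery[OF assms(1)] guarantee
    by (intro INF_lower2[of "log_lottery \<mu> \<sigma>"] SUP_least) auto
  with guarantee show ?thesis
    by blast
qed

end
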